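(* For $j\in\mathbb{Z}_{\ge0}$, \[ C_j(x)=\frac{q^{-1}\lambda}{1+q^{-1}x}B_j(x)+\frac{\beta_E(j)\beta_E(j+1)-q^{-1}\lambda\,\beta_E(j)^2}{1+q^{-1}x}, \] where $B_j(x)=\sum_{l\ge0}\beta_E(l+j)^2x^l$ and $C_j(x)=\sum_{l\ge0}\beta_E(l+j+1)\beta_E(l+j)x^l$ (formal power series in $x$).
   Context: $F$ is a $p$-adic field with odd residue cardinality $q$, uniformizer $\varpi$. $\pi$ is an irreducible unitary unramified representation of $\mathrm{GL}_2(F)$ with trivial central character, a quotient of $\chi\times\chi^{-1}$ with $\chi$ unramified; $\alpha=\chi(\varpi)$ and $\lambda=q^{1/2}(\alpha+\alpha^{-1})\in\mathbb{R}$. $\phi$ is the spherical unit vector, $E$ a quadratic étale algebra over $F$, $\alpha_E(\phi_1,\phi_2)=\int_{F^\times\backslash E^\times}\langle\pi(t)\phi_1,\phi_2\rangle d^\times t$ with $\alpha_E(\phi,\phi)\ne0$, and $\beta_E(l)=\alpha_E(\pi(\mathrm{diag}(\varpi^{-l},1))\phi,\phi)/\alpha_E(\phi,\phi)$. These satisfy $q\beta_E(l+2)-\lambda\beta_E(l+1)+\beta_E(l)=0$ for $l\ge0$, $\beta_E(0)=1$. *)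

theory Defs
  imports Complex_Main "HOL-Computational_Algebra.Formal_Power_Series"
    "HOL-Computational_Algebra.Primes"
begin

definition B_ser :: "(nat \<Rightarrow> complex) \<Rightarrow> nat \<Rightarrow> complex fps" where
  "B_ser beta j = Abs_fps (\<lambda>l. beta (l + j) ^ 2)"

definition C_ser :: "(nat \<Rightarrow> complex) \<Rightarrow> nat \<Rightarrow> complex fps" where
  "C_ser beta j = Abs_fps (\<lambda>l. beta (l + j + 1) * beta (l + j))"

end

theory Submission
  imports Defs
begin

text \<open>Multiplying \<open>C\<^sub>j\<close> by \<open>1 + x/q\<close>, the coefficient of \<open>x^(l+1)\<close> becomes
  \<open>\<beta>(l+j+1) (\<beta>(l+j+2) + \<beta>(l+j)/q)\<close>, which the recurrence turns into \<open>(\<lambda>/q) \<beta>(l+j+1)\<^sup>2\<close>,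
  the corresponding coefficient of \<open>(\<lambda>/q) B\<^sub>j\<close>. Only the constant terms differ, by
  \<open>\<beta>(j)\<beta>(j+1) - (\<lambda>/q) \<beta>(j)\<^sup>2\<close>; dividing by the unit \<open>1 + x/q\<close> gives the claim.\<close>

lemma C_ser_mult_eq_B_ser:
  fixes c lam :: complex
  assumes "c \<noteq> 0"
    and rec: "\<And>l. c * beta (l + 2) - lam * beta (l + 1) + beta l = 0"
  shows "C_ser beta j * (1 + fps_const (1 / c) * fps_X) =
    fps_const (lam / c) * B_ser beta j + fps_const (beta j * beta (j + 1) - lam / c * beta j ^ 2)"
proof (rule fps_ext)
  fix n
  have expand: "C_ser beta j * (1 + fps_const (1 / c) * fps_X) =
      C_ser beta j + fps_const (1 / c) * (fps_X * C_ser beta j)"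
    by (simp add: algebra_simps)
  show "fps_nth (C_ser beta j * (1 + fps_const (1 / c) * fps_X)) n =
    fps_nth (fps_const (lam / c) * B_ser beta j
      + fps_const (beta j * beta (j + 1) - lam / c * beta j ^ 2)) n"
  proof (cases n)
    case 0
    then show ?thesis
      unfolding expand by (simp add: C_ser_def B_ser_def algebra_simps)
  next
    case (Suc m)
    have "beta (m + j + 2) + beta (m + j) / c = lam / c * beta (m + j + 1)"
      using rec[of "m + j"] \<open>c \<noteq> 0\<close> by (simp add: field_simps)
    then have "beta (m + j + 2) * beta (m + j + 1) + beta (m + j + 1) * beta (m + j) / c =
        lam / c * beta (m + j + 1) ^ 2"
      by (metis (no_types) distrib_left mult.assoc mult.commute power2_eq_square times_divide_eq_right)
    then show ?thesis
      unfolding expand using Suc by (simp add: C_ser_def B_ser_def fps_X_mult_nth algebra_simps)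
  qed
qed

theorem lemma4p2:
  fixes q :: nat and lam :: real and beta :: "nat \<Rightarrow> complex" and j :: nat
  assumes q_pp: "\<exists>p k. prime p \<and> 0 < k \<and> q = p ^ k"
    and q_odd: "odd q"
    and rec: "\<forall>l. of_nat q * beta (l + 2) - complex_of_real lam * beta (l + 1) + beta l = 0"
    and beta0: "beta 0 = 1"
  shows "C_ser beta j =
    fps_const (complex_of_real lam / of_nat q) * B_ser beta j / (1 + fps_const (1 / of_nat q) * fps_X)
    + fps_const (beta j * beta (j + 1) - complex_of_real lam / of_nat q * beta j ^ 2)
        / (1 + fps_const (1 / of_nat q) * fps_X)"
proof -
  \<comment> \<open>Of the hypotheses on \<open>q\<close> only \<open>q \<noteq> 0\<close> matters.\<close>
  define D :: "complex fps" where "D = 1 + fps_const (1 / of_nat q) * fps_X"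
  have "(of_nat q :: complex) \<noteq> 0"
    using q_odd by (auto elim: oddE)
  then have "C_ser beta j * D =
      fps_const (complex_of_real lam / of_nat q) * B_ser beta j
      + fps_const (beta j * beta (j + 1) - complex_of_real lam / of_nat q * beta j ^ 2)"
    unfolding D_def using rec by (intro C_ser_mult_eq_B_ser) auto
  moreover have "fps_nth D 0 = 1"
    by (simp add: D_def)
  then have "D \<noteq> 0"
    by auto
  ultimately show ?thesis
    unfolding D_def[symmetric] by (metis fps_divide_times_eq fps_divide_add)
qed

end
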